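(* Let $k\ge0$, $n\ge1$ be integers and fix $\psi>0$. The $3$-dimensional first-order linear system $$\frac{\mathrm d}{\mathrm d\varphi}\mathbf g=\frac1\varphi\begin{pmatrix}0 & 2e^{-\varphi^2+2\varphi\psi}\varphi^{2(k+1)} & 0\\ 0&0&1\\ 0 & -2(2n-1)\varphi\psi & -[4\varphi\psi+2(n-1)]\end{pmatrix}\mathbf g$$ is stabile, as $\varphi\to\infty$, for its solution $\mathbf g(\varphi)=\big(H^k_n(\varphi^2,\psi^2),\ v(\varphi),\ \theta_\varphi\bullet v(\varphi)\big)^{\mathsf T}$, where $v(\varphi)=e^{-2\varphi\psi}\,{}_0F_1(;n;\varphi^2\psi^2)$.
   Context: ${}_0F_1(;n;z)=\sum_{i\ge0} \frac{z^i}{(n)_i\, i!}$ with $(a)_i$ the Pochhammer symbol. $H^k_n(x,\lambda)=\int_0^x y^{k}e^{-y}\,{}_0F_1(;n;\lambda y)\,\mathrm{d}y$. $\theta_\varphi=\varphi\frac{\mathrm d}{\mathrm d\varphi}$. Stabile: Let a first-order linear system in a variable $t$ have $m$-dimensional solution space with basis $f_1,\dots,f_m$ (vector-valued), and let $f_i$ be a dominant solution as $t\to\infty$, i.e. $\|f_i(t)\|\ge\|f_j(t)\|$ for all $j$ for large $t$. The system is called stabile for a particular solution $f$ (as $t\to\infty$) if $\lim_{t\to\infty}\|f_i(t)\|/\|f(t)\|<\infty$ (finite); this does not depend on the chosen basis. *)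

theory Defs
  imports "HOL-Analysis.Analysis"
begin

definition hyp0F1 :: "real \<Rightarrow> real \<Rightarrow> real" where
  "hyp0F1 n z = (\<Sum>i. z ^ i / (pochhammer n i * fact i))"

definition H :: "nat \<Rightarrow> nat \<Rightarrow> real \<Rightarrow> real \<Rightarrow> real" where
  "H k n x lam = integral {0..x} (\<lambda>y. y ^ k * exp (- y) * hyp0F1 (real n) (lam * y))"

definition theta :: "(real \<Rightarrow> real) \<Rightarrow> real \<Rightarrow> real" where
  "theta v \<phi> = \<phi> * deriv v \<phi>"

definition sol_space :: "(real \<Rightarrow> real^'n^'n) \<Rightarrow> (real \<Rightarrow> real^'n) set" where
  "sol_space M = {g. \<forall>t>0. (g has_vector_derivative (M t *v g t)) (at t)}"

definition sol_basis :: "(real \<Rightarrow> real^'n^'n) \<Rightarrow> nat \<Rightarrow> (nat \<Rightarrow> real \<Rightarrow> real^'n) \<Rightarrow> bool" where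
  "sol_basis M m F \<longleftrightarrow>
     (\<forall>j<m. F j \<in> sol_space M) \<and>
     (\<forall>c. (\<forall>t>0. (\<Sum>j<m. c j *\<^sub>R F j t) = 0) \<longrightarrow> (\<forall>j<m. c j = 0)) \<and>
     (\<forall>g\<in>sol_space M. \<exists>c. \<forall>t>0. g t = (\<Sum>j<m. c j *\<^sub>R F j t))"

definition stabile :: "(real \<Rightarrow> real^'n^'n) \<Rightarrow> (real \<Rightarrow> real^'n) \<Rightarrow> bool" where
  "stabile M f \<longleftrightarrow> f \<in> sol_space M \<and>
     (\<exists>F i. sol_basis M CARD('n) F \<and> i < CARD('n) \<and>
        (\<forall>\<^sub>F t in at_top. \<forall>j<CARD('n). norm (F j t) \<le> norm (F i t)) \<and>
        (\<exists>L::real. ((\<lambda>t. norm (F i t) / norm (f t)) \<longlongrightarrow> L) at_top))"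

definition sysM :: "nat \<Rightarrow> nat \<Rightarrow> real \<Rightarrow> real \<Rightarrow> real^3^3" where
  "sysM k n \<psi> \<phi> = (1 / \<phi>) *\<^sub>R (vector [
      vector [0, 2 * exp (- (\<phi>^2) + 2 * \<phi> * \<psi>) * \<phi> ^ (2 * (k + 1)), 0],
      vector [0, 0, 1],
      vector [0, - 2 * (2 * real n - 1) * \<phi> * \<psi>, - (4 * \<phi> * \<psi> + 2 * (real n - 1))]] :: real^3^3)"

definition vfun :: "nat \<Rightarrow> real \<Rightarrow> real \<Rightarrow> real" where
  "vfun n \<psi> \<phi> = exp (- 2 * \<phi> * \<psi>) * hyp0F1 (real n) (\<phi>^2 * \<psi>^2)"

definition gsol :: "nat \<Rightarrow> nat \<Rightarrow> real \<Rightarrow> real \<Rightarrow> real^3" where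
  "gsol k n \<psi> \<phi> = vector [H k n (\<phi>^2) (\<psi>^2), vfun n \<psi> \<phi>, theta (vfun n \<psi>) \<phi>]"

end

theory Submission
  imports Defs
begin

(*
  Write g = (u, x, y). The system reads u' = m12 x, phi x' = y, y' = m32 x + m33 y, so u is a
  quadrature and everything is decided by the planar subsystem for (x, y). The function
  v(phi) = e^(-2 phi psi) 0F1(;n;phi^2 psi^2) solves it, with y = theta v, because 0F1(;n;z) solves
  z F'' + n F' = F. A second solution comes from reduction of order: by Abel's identity the
  Wronskian v y - x theta v of two solutions is a multiple of W = exp (integral of m33), and
  x2 = v R with R' = W / (phi v^2). Since 0F1(;n;z) >= z/n we get phi W <= v^2 for large phi, so
  R' <= 1/phi^2 and R stays bounded. Hence the second solution, and also the constant solution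
  (1, 0, 0) (the first component of g is increasing and positive), grow at most like g. After
  rescaling them, g is a dominant element of a basis, and the ratio in the definition of
  stability is identically 1.
*)

section \<open>The confluent hypergeometric limit function\<close>

lemma pochhammer_ge_one: "a \<ge> 1 \<Longrightarrow> pochhammer (a::real) i \<ge> 1"
proof (induction i)
  case (Suc i)
  have "1 * 1 \<le> (a + of_nat i) * pochhammer a i"
    using Suc by (intro mult_mono) auto
  then show ?case by (simp add: pochhammer_rec')
qed simp

lemma pochhammer_ge_min_one:
  assumes "a > 0" shows "min a 1 \<le> pochhammer (a::real) i"
proof (cases i)
  case (Suc j)
  have "a * 1 \<le> a * pochhammer (a + 1) j"
    using pochhammer_ge_one[of "a + 1" j] assms by (intro mult_left_mono) auto
  then show ?thesis by (simp add: Suc pochhammer_rec)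
qed simp

lemma summable_hyp0F1_series:
  assumes "a > 0"
  shows "summable (\<lambda>i. (z::real) ^ i / (pochhammer a i * fact i))"
proof (rule summable_comparison_test)
  show "summable (\<lambda>i. inverse (min a 1) * (inverse (fact i) * \<bar>z\<bar> ^ i))"
    by (intro summable_mult summable_exp)
  have "norm (z ^ i / (pochhammer a i * fact i)) \<le> inverse (min a 1) * (inverse (fact i) * \<bar>z\<bar> ^ i)" for i
  proof -
    have "min a 1 \<le> pochhammer a i" "0 < min a 1" using pochhammer_ge_min_one assms by auto
    then have "\<bar>z\<bar> ^ i / (pochhammer a i * fact i) \<le> \<bar>z\<bar> ^ i / (min a 1 * fact i)"
      by (intro divide_left_mono mult_right_mono mult_pos_pos) auto
    moreover have "pochhammer a i > 0" using assms by (simp add: pochhammer_pos)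
    ultimately show ?thesis by (simp add: abs_mult power_abs field_simps)
  qed
  then show "\<exists>N. \<forall>i\<ge>N. norm (z ^ i / (pochhammer a i * fact i)) \<le> inverse (min a 1) * (inverse (fact i) * \<bar>z\<bar> ^ i)"
    by blast
qed

lemma hyp0F1_sums: "a > 0 \<Longrightarrow> (\<lambda>i. z ^ i / (pochhammer a i * fact i)) sums hyp0F1 a z"
  unfolding hyp0F1_def by (intro summable_sums summable_hyp0F1_series)

lemma hyp0F1_has_real_derivative:
  assumes "a > 0"
  shows "(hyp0F1 a has_real_derivative hyp0F1 (a + 1) z / a) (at z)"
proof -
  let ?c = "\<lambda>i. inverse (pochhammer a i * fact i)"
  have diffs: "diffs ?c i * z ^ i = z ^ i / (pochhammer (a + 1) i * fact i) / a" for i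
    using assms by (simp add: diffs_def pochhammer_rec field_simps pochhammer_pos del: of_nat_Suc)
  have "(\<lambda>i. diffs ?c i * z ^ i) sums (hyp0F1 (a + 1) z / a)"
    unfolding diffs using assms by (intro sums_divide hyp0F1_sums) auto
  moreover have "hyp0F1 a = (\<lambda>z. \<Sum>i. ?c i * z ^ i)"
    by (simp add: hyp0F1_def fun_eq_iff field_simps)
  moreover have "summable (\<lambda>i. ?c i * y ^ i)" for y
    using summable_hyp0F1_series[OF assms, of y] by (simp add: field_simps)
  ultimately show ?thesis
    using termdiffs_strong_converges_everywhere[of ?c z] by (simp add: sums_iff)
qed

lemma isCont_hyp0F1: "a > 0 \<Longrightarrow> isCont (hyp0F1 a) z"
  using hyp0F1_has_real_derivative DERIV_isCont by blast

lemma hyp0F1_ge_term: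
  assumes "a > 0" "z \<ge> 0"
  shows "z ^ i / (pochhammer a i * fact i) \<le> hyp0F1 a z"
proof -
  have "(\<Sum>j\<in>{i}. z ^ j / (pochhammer a j * fact j)) \<le> hyp0F1 a z"
    unfolding hyp0F1_def using summable_hyp0F1_series assms
    by (intro sum_le_suminf) (auto intro!: divide_nonneg_pos simp: pochhammer_pos)
  then show ?thesis by simp
qed

lemma hyp0F1_ge_one: "a > 0 \<Longrightarrow> z \<ge> 0 \<Longrightarrow> 1 \<le> hyp0F1 a z"
  using hyp0F1_ge_term[of a z 0] by simp

lemma hyp0F1_term_contiguous:
  fixes a z :: real
  assumes "a > 0"
  defines "t b i \<equiv> z ^ i / (pochhammer b i * fact i)"
  shows "z * t (a + 2) i / (a * (a + 1)) + t (a + 1) (Suc i) = t a (Suc i)"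
proof -
  define q p j where "q = pochhammer (a + 1) i" and "p = a + 1 + real i" and "j = real i + 1"
  have "q > 0" "p > 0" "j > 0" "p = a + j" using assms by (simp_all add: q_def p_def j_def pochhammer_pos)
  have q1: "pochhammer (a + 1) (Suc i) = p * q"
    unfolding q_def p_def by (simp add: pochhammer_rec')
  moreover have "pochhammer (a + 1) (Suc i) = (a + 1) * pochhammer (a + 2) i"
    by (simp add: pochhammer_rec add.assoc)
  ultimately have q2: "(a + 1) * pochhammer (a + 2) i = p * q" by simp
  have q0: "pochhammer a (Suc i) = a * q" unfolding q_def by (simp add: pochhammer_rec)
  define w where "w = z ^ Suc i / (q * fact i)"
  have "z * t (a + 2) i / (a * (a + 1)) = z ^ Suc i / (a * ((a + 1) * pochhammer (a + 2) i) * fact i)"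
    unfolding t_def by (simp add: mult_ac)
  also have "\<dots> = w / (a * p)" unfolding q2 w_def by (simp add: mult_ac)
  finally have "z * t (a + 2) i / (a * (a + 1)) = w / (a * p)" .
  moreover have "t (a + 1) (Suc i) = w / (p * j)"
    unfolding t_def q1 w_def j_def by (simp add: field_simps)
  moreover have "t a (Suc i) = w / (a * j)"
    unfolding t_def q0 w_def j_def by (simp add: field_simps)
  moreover have "w / (a * p) + w / (p * j) = w * (a + j) / (a * p * j)"
    using assms \<open>p > 0\<close> \<open>j > 0\<close> by (simp add: field_simps)
  moreover have "w * (a + j) / (a * p * j) = w / (a * j)"
    using \<open>p > 0\<close> unfolding \<open>p = a + j\<close>[symmetric] by simp
  ultimately show ?thesis by simp
qed

lemma hyp0F1_contiguous:
  assumes "a > 0"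
  shows "z * hyp0F1 (a + 2) z / (a * (a + 1)) + hyp0F1 (a + 1) z = hyp0F1 a z"
proof -
  define t where "t b i = z ^ i / (pochhammer b i * fact i)" for b i
  have tail: "(\<lambda>i. t b (Suc i)) sums (hyp0F1 b z - 1)" if "b > 0" for b
    using hyp0F1_sums[OF that, of z] unfolding t_def by (subst sums_Suc_iff) simp
  have "(\<lambda>i. z * t (a + 2) i / (a * (a + 1)) + t (a + 1) (Suc i)) sums
          (z * hyp0F1 (a + 2) z / (a * (a + 1)) + (hyp0F1 (a + 1) z - 1))"
    using assms unfolding t_def
    by (intro sums_add sums_divide sums_mult tail[unfolded t_def] hyp0F1_sums) auto
  moreover have "(\<lambda>i. t a (Suc i)) sums (hyp0F1 a z - 1)" using tail assms .
  ultimately show ?thesis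
    unfolding t_def hyp0F1_term_contiguous[OF assms] by (auto dest: sums_unique2)
qed

definition hyp0F1_deriv :: "real \<Rightarrow> nat \<Rightarrow> real \<Rightarrow> real" where
  "hyp0F1_deriv a j z = hyp0F1 (a + of_nat j) z / pochhammer a j"

lemma hyp0F1_deriv_0 [simp]: "hyp0F1_deriv a 0 = hyp0F1 a"
  by (simp add: hyp0F1_deriv_def fun_eq_iff)

lemma hyp0F1_deriv_has_real_derivative:
  assumes "a > 0"
  shows "(hyp0F1_deriv a j has_real_derivative hyp0F1_deriv a (Suc j) z) (at z)"
proof -
  have "a + of_nat j > 0" using assms by simp
  from DERIV_cdivide[OF hyp0F1_has_real_derivative[OF this], of "pochhammer a j"]
  show ?thesis unfolding hyp0F1_deriv_def[abs_def] by (simp add: pochhammer_rec' ac_simps)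
qed

lemma hyp0F1_deriv_chain:
  assumes "a > 0" "(f has_real_derivative f') (at x)"
  shows "((\<lambda>x. hyp0F1_deriv a j (f x)) has_real_derivative hyp0F1_deriv a (Suc j) (f x) * f') (at x)"
  using DERIV_chain2[OF hyp0F1_deriv_has_real_derivative assms(2)] assms(1) .

lemma hyp0F1_chain:
  assumes "a > 0" "(f has_real_derivative f') (at x)"
  shows "((\<lambda>x. hyp0F1 a (f x)) has_real_derivative hyp0F1_deriv a 1 (f x) * f') (at x)"
  using hyp0F1_deriv_chain[OF assms, of 0] by simp

lemma hyp0F1_ode:
  assumes "a > 0"
  shows "z * hyp0F1_deriv a 2 z + a * hyp0F1_deriv a 1 z = hyp0F1 a z"
  using hyp0F1_contiguous[OF assms, of z] assms
  by (simp add: hyp0F1_deriv_def numeral_2_eq_2 pochhammer_rec add.assoc)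

lemma DERIV_zero_imp_constant_on_greaterThan:
  fixes f :: "real \<Rightarrow> real"
  assumes "\<And>t. t > l \<Longrightarrow> (f has_real_derivative 0) (at t)"
  shows "\<exists>c. \<forall>t>l. f t = c"
  using has_field_derivative_zero_constant[of "{l<..}" f] assms
  by (metis convex_real_interval(3) greaterThan_iff has_field_derivative_at_within)

lemma interval_integral_has_real_derivative:
  fixes f :: "real \<Rightarrow> real"
  assumes f: "continuous_on {l<..} f" and "l < c" "l < x"
  shows "((\<lambda>t. LBINT s=c..t. f s) has_real_derivative f x) (at x)"
proof -
  define a b where "a = (l + min c x) / 2" and "b = max c x + 1"
  have ab: "l < a" "a < c" "a < x" "c < b" "x < b" unfolding a_def b_def using assms by auto
  then have "((\<lambda>t. LBINT s=c..t. f s) has_vector_derivative f x) (at x within {a..b})"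
    by (intro interval_integral_FTC2 continuous_on_subset[OF f]) auto
  moreover have "at x within {a..b} = at x" using ab by (intro at_within_interior) auto
  ultimately show ?thesis by (simp add: has_real_derivative_iff_has_vector_derivative)
qed

lemma has_vector_derivative_vector3:
  assumes "(a has_real_derivative a') (at t)" "(b has_real_derivative b') (at t)"
    and "(c has_real_derivative c') (at t)"
  shows "((\<lambda>t. vector [a t, b t, c t] :: real^3) has_vector_derivative vector [a', b', c']) (at t)"
proof -
  have split: "vector [p, q, r] = p *\<^sub>R (vector [1, 0, 0] :: real^3) + q *\<^sub>R vector [0, 1, 0] + r *\<^sub>R vector [0, 0, 1]"
    for p q r :: real
    unfolding vec_eq_iff
  proof
    fix i :: 3
    show "vector [p, q, r] $ i = (p *\<^sub>R (vector [1, 0, 0] :: real^3) + q *\<^sub>R vector [0, 1, 0] + r *\<^sub>R vector [0, 0, 1]) $ i"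
      using exhaust_3[of i] by auto
  qed
  have "((\<lambda>t. a t *\<^sub>R (vector [1, 0, 0] :: real^3) + b t *\<^sub>R vector [0, 1, 0] + c t *\<^sub>R vector [0, 0, 1])
      has_vector_derivative (a' *\<^sub>R (vector [1, 0, 0] :: real^3) + b' *\<^sub>R vector [0, 1, 0] + c' *\<^sub>R vector [0, 0, 1])) (at t)"
    using assms by (auto intro!: derivative_eq_intros)
  then show ?thesis by (simp only: split[symmetric])
qed

lemma has_vector_derivative_vec_nth:
  assumes "(g has_vector_derivative g') (at t)"
  shows "((\<lambda>t. g t $ i) has_real_derivative g' $ i) (at t)"
proof -
  have "((\<lambda>t. g t $ i) has_derivative (\<lambda>h. (h *\<^sub>R g') $ i)) (at t)"
    using bounded_linear.has_derivative[OF bounded_linear_vec_nth assms[unfolded has_vector_derivative_def]] .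
  moreover have "(\<lambda>h. (h *\<^sub>R g') $ i) = (*) (g' $ i)" by (auto simp: fun_eq_iff)
  ultimately show ?thesis by (simp add: has_field_derivative_def)
qed

lemma sol_space_scaleR:
  assumes "f \<in> sol_space M"
  shows "(\<lambda>t. c *\<^sub>R f t) \<in> sol_space M"
  using assms unfolding sol_space_def
  by (auto intro!: derivative_eq_intros simp: matrix_vector_mult_scaleR)

lemma sol_basisI:
  assumes "\<And>j. j < m \<Longrightarrow> B j \<in> sol_space M"
    and "t\<^sub>0 > 0" and "\<And>c. (\<Sum>j<m. c j *\<^sub>R B j t\<^sub>0) = 0 \<Longrightarrow> \<forall>j<m. c j = 0"
    and "\<And>g. g \<in> sol_space M \<Longrightarrow> \<exists>c. \<forall>t>0. g t = (\<Sum>j<m. c j *\<^sub>R B j t)"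
  shows "sol_basis M m B"
  using assms unfolding sol_basis_def by blast

lemma stabileI:
  fixes M :: "real \<Rightarrow> real^'n^'n"
  assumes "sol_basis M CARD('n) B" "i < CARD('n)" "B i = f"
    and "\<forall>\<^sub>F t in at_top. \<forall>j<CARD('n). norm (B j t) \<le> norm (f t)"
    and "\<forall>\<^sub>F t in at_top. f t \<noteq> 0"
  shows "stabile M f"
proof -
  have "f \<in> sol_space M" using assms(1-3) unfolding sol_basis_def by blast
  moreover have "((\<lambda>t. norm (B i t) / norm (f t)) \<longlongrightarrow> 1) at_top"
    using assms(5) by (rule tendsto_eventually[OF eventually_mono]) (simp add: assms(3))
  ultimately show ?thesis
    unfolding stabile_def using assms(1-4) by blast
qed

definition m12 :: "nat \<Rightarrow> real \<Rightarrow> real \<Rightarrow> real" where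
  "m12 k \<psi> \<phi> = 2 * exp (- (\<phi>^2) + 2 * \<phi> * \<psi>) * \<phi> ^ (2 * k + 1)"

definition m32 :: "nat \<Rightarrow> real \<Rightarrow> real" where
  "m32 n \<psi> = - 2 * (2 * real n - 1) * \<psi>"

definition m33 :: "nat \<Rightarrow> real \<Rightarrow> real \<Rightarrow> real" where
  "m33 n \<psi> \<phi> = - (4 * \<psi> + 2 * (real n - 1) / \<phi>)"

lemma sysM_mult:
  assumes "\<phi> \<noteq> 0"
  shows "sysM k n \<psi> \<phi> *v g =
    vector [m12 k \<psi> \<phi> * g$2, g$3 / \<phi>, m32 n \<psi> * g$2 + m33 n \<psi> \<phi> * g$3]"
  unfolding vec_eq_iff
proof
  fix i :: 3
  show "(sysM k n \<psi> \<phi> *v g) $ i =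
    vector [m12 k \<psi> \<phi> * g$2, g$3 / \<phi>, m32 n \<psi> * g$2 + m33 n \<psi> \<phi> * g$3] $ i"
    using exhaust_3[of i] assms
    by (auto simp: sysM_def m12_def m32_def m33_def scaleR_matrix_vector_assoc[symmetric]
        matrix_vector_mult_def sum_3 field_simps)
qed

lemma m12_pos: "\<phi> > 0 \<Longrightarrow> m12 k \<psi> \<phi> > 0"
  by (simp add: m12_def)

lemma vector3_in_sol_space_sysM:
  assumes "\<And>t. t > 0 \<Longrightarrow> (u has_real_derivative m12 k \<psi> t * x t) (at t)"
    and "\<And>t. t > 0 \<Longrightarrow> (x has_real_derivative y t / t) (at t)"
    and "\<And>t. t > 0 \<Longrightarrow> (y has_real_derivative m32 n \<psi> * x t + m33 n \<psi> t * y t) (at t)"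
  shows "(\<lambda>t. vector [u t, x t, y t]) \<in> sol_space (sysM k n \<psi>)"
  unfolding sol_space_def using assms by (auto simp: sysM_mult intro!: has_vector_derivative_vector3)

lemma sol_space_sysM_components:
  assumes "g \<in> sol_space (sysM k n \<psi>)" "t > 0"
  shows "((\<lambda>t. g t $ 1) has_real_derivative m12 k \<psi> t * g t $ 2) (at t)"
    and "((\<lambda>t. g t $ 2) has_real_derivative g t $ 3 / t) (at t)"
    and "((\<lambda>t. g t $ 3) has_real_derivative m32 n \<psi> * g t $ 2 + m33 n \<psi> t * g t $ 3) (at t)"
proof -
  have "(g has_vector_derivative
      vector [m12 k \<psi> t * g t $ 2, g t $ 3 / t, m32 n \<psi> * g t $ 2 + m33 n \<psi> t * g t $ 3]) (at t)"
    using assms unfolding sol_space_def by (simp add: sysM_mult)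
  note components = has_vector_derivative_vec_nth[OF this]
  show "((\<lambda>t. g t $ 1) has_real_derivative m12 k \<psi> t * g t $ 2) (at t)"
    using components[of 1] by simp
  show "((\<lambda>t. g t $ 2) has_real_derivative g t $ 3 / t) (at t)"
    using components[of 2] by simp
  show "((\<lambda>t. g t $ 3) has_real_derivative m32 n \<psi> * g t $ 2 + m33 n \<psi> t * g t $ 3) (at t)"
    using components[of 3] by simp
qed

definition vtheta :: "nat \<Rightarrow> real \<Rightarrow> real \<Rightarrow> real" where
  "vtheta n \<psi> \<phi> = exp (- 2 * \<phi> * \<psi>) *
     (2 * \<phi>^2 * \<psi>^2 * hyp0F1_deriv (real n) 1 (\<phi>^2 * \<psi>^2) - 2 * \<phi> * \<psi> * hyp0F1 (real n) (\<phi>^2 * \<psi>^2))"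

definition Hsq :: "nat \<Rightarrow> nat \<Rightarrow> real \<Rightarrow> real \<Rightarrow> real" where
  "Hsq k n \<psi> \<phi> = H k n (\<phi>^2) (\<psi>^2)"

(* By Abel's identity the Wronskian of two solutions of the (x, y)-subsystem is a multiple of
   liouville = exp (integral of m33); reduction of order then gives x2 = v * rfac with
   rfac' = liouville / (t v^2). *)
definition liouville :: "nat \<Rightarrow> real \<Rightarrow> real \<Rightarrow> real" where
  "liouville n \<psi> t = exp (- 4 * \<psi> * t - (2 * real n - 2) * ln t)"

definition rfac :: "nat \<Rightarrow> real \<Rightarrow> real \<Rightarrow> real" where
  "rfac n \<psi> t = (LBINT s=1..t. liouville n \<psi> s / (s * vfun n \<psi> s ^ 2))"

definition x2 :: "nat \<Rightarrow> real \<Rightarrow> real \<Rightarrow> real" where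
  "x2 n \<psi> t = vfun n \<psi> t * rfac n \<psi> t"

definition y2 :: "nat \<Rightarrow> real \<Rightarrow> real \<Rightarrow> real" where
  "y2 n \<psi> t = vtheta n \<psi> t * rfac n \<psi> t + liouville n \<psi> t / vfun n \<psi> t"

definition u2 :: "nat \<Rightarrow> nat \<Rightarrow> real \<Rightarrow> real \<Rightarrow> real" where
  "u2 k n \<psi> t = (LBINT s=1..t. m12 k \<psi> s * x2 n \<psi> s)"

definition gsol2 :: "nat \<Rightarrow> nat \<Rightarrow> real \<Rightarrow> real \<Rightarrow> real^3" where
  "gsol2 k n \<psi> t = vector [u2 k n \<psi> t, x2 n \<psi> t, y2 n \<psi> t]"

lemma liouville_pos: "liouville n \<psi> t > 0"
  by (simp add: liouville_def)

lemma liouville_has_real_derivative: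
  "t > 0 \<Longrightarrow> (liouville n \<psi> has_real_derivative m33 n \<psi> t * liouville n \<psi> t) (at t)"
  unfolding liouville_def[abs_def] m33_def
  by (auto intro!: derivative_eq_intros simp: field_simps)

context
  fixes k n :: nat and \<psi> :: real
  assumes n: "n \<ge> 1"
begin

section \<open>The distinguished solution\<close>

lemma vfun_has_real_derivative:
  "(vfun n \<psi> has_real_derivative exp (- 2 * \<phi> * \<psi>) *
     (2 * \<phi> * \<psi>^2 * hyp0F1_deriv (real n) 1 (\<phi>^2 * \<psi>^2) - 2 * \<psi> * hyp0F1 (real n) (\<phi>^2 * \<psi>^2))) (at \<phi>)"
  using n unfolding vfun_def[abs_def]
  by (auto intro!: derivative_eq_intros hyp0F1_chain simp: algebra_simps)

lemma theta_vfun: "theta (vfun n \<psi>) = vtheta n \<psi>"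
  by (auto simp: fun_eq_iff theta_def vtheta_def DERIV_imp_deriv[OF vfun_has_real_derivative]
      algebra_simps power2_eq_square)

lemma vfun_has_real_derivative_vtheta:
  "\<phi> \<noteq> 0 \<Longrightarrow> (vfun n \<psi> has_real_derivative vtheta n \<psi> \<phi> / \<phi>) (at \<phi>)"
  using vfun_has_real_derivative
  by (rule DERIV_cong) (simp add: vtheta_def field_simps power2_eq_square)

lemma vtheta_has_real_derivative:
  assumes "\<phi> \<noteq> 0"
  shows "(vtheta n \<psi> has_real_derivative m32 n \<psi> * vfun n \<psi> \<phi> + m33 n \<psi> \<phi> * vtheta n \<psi> \<phi>) (at \<phi>)"
proof -
  define z where "z = \<phi>^2 * \<psi>^2"
  define E where "E = exp (- 2 * \<phi> * \<psi>)"
  let ?D0 = "hyp0F1 (real n) z" and ?D1 = "hyp0F1_deriv (real n) 1 z" and ?D2 = "hyp0F1_deriv (real n) 2 z"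
  have "(vtheta n \<psi> has_real_derivative
      E * (- 2 * \<psi>) * (2 * z * ?D1 - 2 * \<phi> * \<psi> * ?D0)
      + E * (4 * \<phi> * \<psi>^2 * ?D1 + 2 * z * (?D2 * (2 * \<phi> * \<psi>^2)) - 2 * \<psi> * ?D0
             - 2 * \<phi> * \<psi> * (?D1 * (2 * \<phi> * \<psi>^2)))) (at \<phi>)"
    using n unfolding vtheta_def[abs_def] z_def E_def
    by (auto intro!: derivative_eq_intros hyp0F1_deriv_chain hyp0F1_chain simp: algebra_simps numeral_2_eq_2)
  moreover have "E * (- 2 * \<psi>) * (2 * z * ?D1 - 2 * \<phi> * \<psi> * ?D0)
      + E * (4 * \<phi> * \<psi>^2 * ?D1 + 2 * z * (?D2 * (2 * \<phi> * \<psi>^2)) - 2 * \<psi> * ?D0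
             - 2 * \<phi> * \<psi> * (?D1 * (2 * \<phi> * \<psi>^2)))
    - (m32 n \<psi> * vfun n \<psi> \<phi> + m33 n \<psi> \<phi> * vtheta n \<psi> \<phi>)
    = 4 * \<phi> * \<psi>^2 * E * (z * ?D2 + real n * ?D1 - ?D0)"
    using assms unfolding vfun_def vtheta_def m32_def m33_def z_def E_def
    by (simp add: field_simps power2_eq_square)
  moreover have "z * ?D2 + real n * ?D1 - ?D0 = 0"
    using hyp0F1_ode[of "real n" z] n by simp
  ultimately show ?thesis by (simp add: DERIV_cong)
qed

lemma H_has_real_derivative:
  assumes "x > 0"
  shows "((\<lambda>x. H k n x lam) has_real_derivative x ^ k * exp (- x) * hyp0F1 (real n) (lam * x)) (at x)"
proof -
  have "continuous_on {0..x + 1} (\<lambda>y. y ^ k * exp (- y) * hyp0F1 (real n) (lam * y))"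
    using n by (intro continuous_at_imp_continuous_on ballI continuous_intros isCont_o2[OF _ isCont_hyp0F1]) auto
  then have "((\<lambda>x. H k n x lam) has_real_derivative x ^ k * exp (- x) * hyp0F1 (real n) (lam * x))
      (at x within {0..x + 1})"
    unfolding H_def using assms by (intro integral_has_real_derivative) auto
  moreover have "at x within {0..x + 1} = at x"
    using assms by (intro at_within_interior) auto
  ultimately show ?thesis by simp
qed

lemma Hsq_has_real_derivative:
  assumes "\<phi> > 0"
  shows "(Hsq k n \<psi> has_real_derivative m12 k \<psi> \<phi> * vfun n \<psi> \<phi>) (at \<phi>)"
proof -
  have "(Hsq k n \<psi> has_real_derivative
      (\<phi>^2) ^ k * exp (- (\<phi>^2)) * hyp0F1 (real n) (\<psi>^2 * \<phi>^2) * (2 * \<phi>)) (at \<phi>)"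
    unfolding Hsq_def[abs_def] using assms
    by (auto intro!: DERIV_chain2[OF H_has_real_derivative] derivative_eq_intros)
  moreover have "(\<phi>^2) ^ k * exp (- (\<phi>^2)) * hyp0F1 (real n) (\<psi>^2 * \<phi>^2) * (2 * \<phi>)
      = m12 k \<psi> \<phi> * vfun n \<psi> \<phi>"
    by (simp add: m12_def vfun_def mult_exp_exp power_mult[symmetric] ac_simps)
  ultimately show ?thesis by simp
qed

lemma gsol_eq: "gsol k n \<psi> = (\<lambda>\<phi>. vector [Hsq k n \<psi> \<phi>, vfun n \<psi> \<phi>, vtheta n \<psi> \<phi>])"
  by (simp add: fun_eq_iff gsol_def Hsq_def theta_vfun)

lemma gsol_in_sol_space: "gsol k n \<psi> \<in> sol_space (sysM k n \<psi>)"
  unfolding gsol_eq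
  by (intro vector3_in_sol_space_sysM Hsq_has_real_derivative vfun_has_real_derivative_vtheta
      vtheta_has_real_derivative) simp_all

lemma vfun_pos: "vfun n \<psi> \<phi> > 0"
  using hyp0F1_ge_one[of "real n" "\<phi>^2 * \<psi>^2"] n unfolding vfun_def by simp

lemma gsol_nonzero: "gsol k n \<psi> t \<noteq> 0"
proof
  assume "gsol k n \<psi> t = 0"
  then have "vfun n \<psi> t = 0" by (metis gsol_def vector_3(2) zero_index)
  then show False using vfun_pos by (metis less_irrefl)
qed

lemma Hsq_strict_mono:
  assumes "0 < a" "a < b"
  shows "Hsq k n \<psi> a < Hsq k n \<psi> b"
proof (rule DERIV_pos_imp_increasing[OF assms(2)])
  fix x assume "a \<le> x" "x \<le> b"
  then have "x > 0" using assms by simp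
  then show "\<exists>y. (Hsq k n \<psi> has_real_derivative y) (at x) \<and> y > 0"
    using Hsq_has_real_derivative vfun_pos m12_pos by (blast intro: mult_pos_pos)
qed

lemma Hsq_pos:
  assumes "\<phi> > 0"
  shows "Hsq k n \<psi> \<phi> > 0"
proof -
  have "0 \<le> Hsq k n \<psi> (\<phi> / 2)"
    unfolding Hsq_def H_def using n
    by (intro integral_nonneg) (auto intro!: integrable_continuous_real continuous_at_imp_continuous_on
        continuous_intros isCont_o2[OF _ isCont_hyp0F1] mult_nonneg_nonneg order.trans[OF zero_le_one hyp0F1_ge_one])
  also have "\<dots> < Hsq k n \<psi> \<phi>" using assms by (intro Hsq_strict_mono) auto
  finally show ?thesis .
qed

lemma unit_vector_dominated:
  "\<forall>\<^sub>F t in at_top. norm (Hsq k n \<psi> 1 *\<^sub>R (vector [1, 0, 0] :: real^3)) \<le> norm (gsol k n \<psi> t)"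
  unfolding eventually_at_top_linorder
proof (intro exI allI impI)
  fix t :: real assume "t \<ge> 1"
  have "norm (Hsq k n \<psi> 1 *\<^sub>R (vector [1, 0, 0] :: real^3)) \<le> Hsq k n \<psi> 1"
    using norm_le_l1_cart[of "Hsq k n \<psi> 1 *\<^sub>R (vector [1, 0, 0] :: real^3)"] Hsq_pos[of 1]
    by (simp add: sum_3)
  also have "\<dots> \<le> Hsq k n \<psi> t"
    using Hsq_strict_mono[of 1 t] \<open>t \<ge> 1\<close> by (cases "t = 1") auto
  also have "\<dots> \<le> norm (gsol k n \<psi> t)"
    using component_le_norm_cart[of "gsol k n \<psi> t" 1] by (simp add: gsol_eq)
  finally show "norm (Hsq k n \<psi> 1 *\<^sub>R (vector [1, 0, 0] :: real^3)) \<le> norm (gsol k n \<psi> t)" .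
qed

section \<open>A second solution by reduction of order\<close>

lemma rfac_has_real_derivative:
  assumes "t > 0"
  shows "(rfac n \<psi> has_real_derivative liouville n \<psi> t / (t * vfun n \<psi> t ^ 2)) (at t)"
  unfolding rfac_def[abs_def] one_ereal_def
proof (rule interval_integral_has_real_derivative[where l = 0])
  have "isCont (vfun n \<psi>) s" for s using vfun_has_real_derivative DERIV_isCont by blast
  then show "continuous_on {0<..} (\<lambda>s. liouville n \<psi> s / (s * vfun n \<psi> s ^ 2))"
    using vfun_pos unfolding liouville_def
    by (intro continuous_at_imp_continuous_on ballI continuous_intros) (auto simp: less_imp_neq[symmetric])
qed (use assms in auto)

lemma x2_has_real_derivative:
  assumes "t > 0"
  shows "(x2 n \<psi> has_real_derivative y2 n \<psi> t / t) (at t)"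
  unfolding x2_def[abs_def]
  by (rule DERIV_cong[OF DERIV_mult'[OF vfun_has_real_derivative_vtheta rfac_has_real_derivative]])
    (use assms vfun_pos[of t] in \<open>simp_all add: y2_def field_simps power2_eq_square\<close>)

lemma y2_has_real_derivative:
  assumes "t > 0"
  shows "(y2 n \<psi> has_real_derivative m32 n \<psi> * x2 n \<psi> t + m33 n \<psi> t * y2 n \<psi> t) (at t)"
  unfolding y2_def[abs_def]
  by (rule DERIV_cong[OF DERIV_add[OF
        DERIV_mult'[OF vtheta_has_real_derivative rfac_has_real_derivative]
        DERIV_divide[OF liouville_has_real_derivative vfun_has_real_derivative_vtheta]]])
    (use assms vfun_pos[of t] in \<open>simp_all add: x2_def y2_def field_simps power2_eq_square\<close>)

lemma u2_has_real_derivative: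
  assumes "t > 0"
  shows "(u2 k n \<psi> has_real_derivative m12 k \<psi> t * x2 n \<psi> t) (at t)"
  unfolding u2_def[abs_def] one_ereal_def
proof (rule interval_integral_has_real_derivative[where l = 0])
  have "isCont (x2 n \<psi>) s" if "s > 0" for s using x2_has_real_derivative[OF that] DERIV_isCont by blast
  then show "continuous_on {0<..} (\<lambda>s. m12 k \<psi> s * x2 n \<psi> s)"
    unfolding m12_def by (intro continuous_at_imp_continuous_on ballI continuous_intros) auto
qed (use assms in auto)

lemma gsol2_in_sol_space: "gsol2 k n \<psi> \<in> sol_space (sysM k n \<psi>)"
  unfolding gsol2_def[abs_def]
  by (intro vector3_in_sol_space_sysM u2_has_real_derivative x2_has_real_derivative y2_has_real_derivative)

lemma sol_space_sysM_wronskian: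
  assumes g: "g \<in> sol_space (sysM k n \<psi>)"
  obtains c where "\<And>t. t > 0 \<Longrightarrow> vfun n \<psi> t * g t $ 3 - g t $ 2 * vtheta n \<psi> t = c * liouville n \<psi> t"
proof -
  let ?w = "\<lambda>t. (vfun n \<psi> t * g t $ 3 - g t $ 2 * vtheta n \<psi> t) / liouville n \<psi> t"
  have "(?w has_real_derivative 0) (at t)" if t: "t > 0" for t
    by (rule DERIV_cong[OF DERIV_divide[OF DERIV_diff[OF
          DERIV_mult'[OF vfun_has_real_derivative_vtheta sol_space_sysM_components(3)[OF g t]]
          DERIV_mult'[OF sol_space_sysM_components(2)[OF g t] vtheta_has_real_derivative]]
          liouville_has_real_derivative]])
      (use t liouville_pos[of n \<psi> t] in \<open>simp_all add: field_simps\<close>)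
  then have "\<exists>c. \<forall>t>0. ?w t = c"
    by (rule DERIV_zero_imp_constant_on_greaterThan)
  then obtain c where c: "\<And>t. t > 0 \<Longrightarrow> ?w t = c" by blast
  have "vfun n \<psi> t * g t $ 3 - g t $ 2 * vtheta n \<psi> t = c * liouville n \<psi> t" if "t > 0" for t
    using c[OF that] liouville_pos[of n \<psi> t] by (simp add: divide_eq_eq)
  then show ?thesis by (rule that)
qed

lemma sol_space_sysM_span:
  assumes g: "g \<in> sol_space (sysM k n \<psi>)"
  shows "\<exists>a b c. \<forall>t>0. g t = a *\<^sub>R gsol k n \<psi> t + b *\<^sub>R vector [1, 0, 0] + c *\<^sub>R gsol2 k n \<psi> t"
proof -
  define u x y where "u t = g t $ 1" and "x t = g t $ 2" and "y t = g t $ 3" for t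
  note u' = sol_space_sysM_components(1)[OF g, folded u_def x_def]
    and x' = sol_space_sysM_components(2)[OF g, folded x_def y_def]
  obtain c where wronskian: "\<And>t. t > 0 \<Longrightarrow> vfun n \<psi> t * y t - x t * vtheta n \<psi> t = c * liouville n \<psi> t"
    using sol_space_sysM_wronskian[OF g] unfolding x_def y_def by blast
  have y_eq: "y t = (c * liouville n \<psi> t + x t * vtheta n \<psi> t) / vfun n \<psi> t" if "t > 0" for t
    using wronskian[OF that] vfun_pos[of t] by (simp add: field_simps)
  have "((\<lambda>t. x t / vfun n \<psi> t - c * rfac n \<psi> t) has_real_derivative 0) (at t)" if t: "t > 0" for t
    by (rule DERIV_cong[OF DERIV_diff[OF DERIV_divide[OF x' vfun_has_real_derivative_vtheta]
          DERIV_cmult[OF rfac_has_real_derivative]]])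
      (use t vfun_pos[of t] y_eq[OF t] in \<open>simp_all add: field_simps power2_eq_square\<close>)
  then have "\<exists>a. \<forall>t>0. x t / vfun n \<psi> t - c * rfac n \<psi> t = a"
    by (rule DERIV_zero_imp_constant_on_greaterThan)
  then obtain a where a: "\<And>t. t > 0 \<Longrightarrow> x t / vfun n \<psi> t - c * rfac n \<psi> t = a" by blast
  have x: "x t = a * vfun n \<psi> t + c * x2 n \<psi> t" if "t > 0" for t
    using a[OF that] vfun_pos[of t] by (simp add: x2_def field_simps)
  have y: "y t = a * vtheta n \<psi> t + c * y2 n \<psi> t" if "t > 0" for t
    using y_eq[OF that] x[OF that] vfun_pos[of t] by (simp add: x2_def y2_def field_simps)
  have "((\<lambda>t. u t - a * Hsq k n \<psi> t - c * u2 k n \<psi> t) has_real_derivative 0) (at t)" if t: "t > 0" for t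
    by (rule DERIV_cong[OF DERIV_diff[OF DERIV_diff[OF u'
          DERIV_cmult[OF Hsq_has_real_derivative]] DERIV_cmult[OF u2_has_real_derivative]]])
      (use t x[OF t] in \<open>simp_all add: algebra_simps\<close>)
  then have "\<exists>b. \<forall>t>0. u t - a * Hsq k n \<psi> t - c * u2 k n \<psi> t = b"
    by (rule DERIV_zero_imp_constant_on_greaterThan)
  then obtain b where b: "\<And>t. t > 0 \<Longrightarrow> u t - a * Hsq k n \<psi> t - c * u2 k n \<psi> t = b" by blast
  have u: "u t = a * Hsq k n \<psi> t + b + c * u2 k n \<psi> t" if "t > 0" for t
    using b[OF that] by (simp add: algebra_simps)
  have "g t = a *\<^sub>R gsol k n \<psi> t + b *\<^sub>R vector [1, 0, 0] + c *\<^sub>R gsol2 k n \<psi> t" if "t > 0" for t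
    unfolding vec_eq_iff
  proof
    fix i :: 3
    show "g t $ i = (a *\<^sub>R gsol k n \<psi> t + b *\<^sub>R vector [1, 0, 0] + c *\<^sub>R gsol2 k n \<psi> t) $ i"
      using exhaust_3[of i] u[OF that] x[OF that] y[OF that] unfolding u_def x_def y_def
      by (auto simp: gsol_eq gsol2_def)
  qed
  then show ?thesis by blast
qed

lemma rfac_1 [simp]: "rfac n \<psi> 1 = 0"
  by (simp add: rfac_def flip: one_ereal_def)

lemma u2_1 [simp]: "u2 k n \<psi> 1 = 0"
  by (simp add: u2_def flip: one_ereal_def)

lemma rfac_mono:
  assumes "0 < a" "a \<le> b"
  shows "rfac n \<psi> a \<le> rfac n \<psi> b"
proof (rule DERIV_nonneg_imp_nondecreasing[OF assms(2)])
  fix x assume "a \<le> x" "x \<le> b"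
  then have "x > 0" using assms by simp
  moreover have "0 \<le> liouville n \<psi> x / (x * vfun n \<psi> x ^ 2)"
    using liouville_pos[of n \<psi> x] vfun_pos[of x] \<open>x > 0\<close> by simp
  ultimately show "\<exists>y. (rfac n \<psi> has_real_derivative y) (at x) \<and> y \<ge> 0"
    using rfac_has_real_derivative by blast
qed

lemma gsol2_1: "gsol2 k n \<psi> 1 = vector [0, 0, liouville n \<psi> 1 / vfun n \<psi> 1]"
  by (simp add: gsol2_def x2_def y2_def)

lemma sol_basis_sysM:
  assumes "a \<noteq> 0" "b \<noteq> 0"
  shows "sol_basis (sysM k n \<psi>) 3
    (\<lambda>j. [gsol k n \<psi>, \<lambda>t. a *\<^sub>R vector [1, 0, 0], \<lambda>t. b *\<^sub>R gsol2 k n \<psi> t] ! j)"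
    (is "sol_basis _ 3 ?B")
proof (rule sol_basisI)
  have sum3: "(\<Sum>j<3. f j) = f 0 + f 1 + f 2" for f :: "nat \<Rightarrow> real^3"
    by (simp add: eval_nat_numeral add.assoc)
  have less3: "j = 0 \<or> j = 1 \<or> j = 2" if "j < 3" for j :: nat using that by auto
  have e1: "(\<lambda>t. vector [1, 0, 0] :: real^3) \<in> sol_space (sysM k n \<psi>)"
    using vector3_in_sol_space_sysM[of "\<lambda>t. 1" k \<psi> "\<lambda>t. 0" "\<lambda>t. 0" n] by simp
  show "?B j \<in> sol_space (sysM k n \<psi>)" if "j < 3" for j
    using less3[OF that] gsol_in_sol_space sol_space_scaleR[OF e1] sol_space_scaleR[OF gsol2_in_sol_space]
    by (elim disjE) simp_all
  show "\<forall>j<3. c j = 0" if "(\<Sum>j<3. c j *\<^sub>R ?B j 1) = 0" for c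
  proof -
    have "c 0 = 0 \<and> c 1 = 0 \<and> c 2 = 0"
      using that assms vfun_pos[of 1] liouville_pos[of n \<psi> 1]
      by (auto simp: sum3 gsol_eq gsol2_1 vec_eq_iff forall_3)
    then show ?thesis using less3 by blast
  qed
  show "\<exists>c. \<forall>t>0. g t = (\<Sum>j<3. c j *\<^sub>R ?B j t)" if g: "g \<in> sol_space (sysM k n \<psi>)" for g
  proof -
    obtain a' b' c' where "\<forall>t>0. g t = a' *\<^sub>R gsol k n \<psi> t + b' *\<^sub>R vector [1, 0, 0] + c' *\<^sub>R gsol2 k n \<psi> t"
      using sol_space_sysM_span[OF g] by blast
    then have "\<forall>t>0. g t = (\<Sum>j<3. [a', b' / a, c' / b] ! j *\<^sub>R ?B j t)"
      using assms by (simp add: sum3)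
    then show ?thesis by blast
  qed
qed (rule zero_less_one)

section \<open>Growth estimates\<close>

lemma rfac_nonneg: "t \<ge> 1 \<Longrightarrow> 0 \<le> rfac n \<psi> t"
  using rfac_mono[of 1 t] by simp

lemma u2_bounds:
  assumes R: "\<And>s. s \<ge> 1 \<Longrightarrow> rfac n \<psi> s \<le> R" and t: "t \<ge> 1"
  shows "0 \<le> u2 k n \<psi> t" and "u2 k n \<psi> t \<le> R * Hsq k n \<psi> t"
proof -
  have x2: "0 \<le> x2 n \<psi> s" "x2 n \<psi> s \<le> R * vfun n \<psi> s" if "s \<ge> 1" for s
    using rfac_nonneg[OF that] R[OF that] vfun_pos[of s] by (simp_all add: x2_def mult.commute)
  have "u2 k n \<psi> 1 \<le> u2 k n \<psi> t"
  proof (rule DERIV_nonneg_imp_nondecreasing[OF t])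
    fix s assume "1 \<le> s" "s \<le> t"
    then have "(u2 k n \<psi> has_real_derivative m12 k \<psi> s * x2 n \<psi> s) (at s)"
      "0 \<le> m12 k \<psi> s * x2 n \<psi> s"
      using u2_has_real_derivative m12_pos[of s k \<psi>] x2(1)[of s] by simp_all
    then show "\<exists>y. (u2 k n \<psi> has_real_derivative y) (at s) \<and> y \<ge> 0" by blast
  qed
  then show "0 \<le> u2 k n \<psi> t" by simp
  have "R * Hsq k n \<psi> 1 - u2 k n \<psi> 1 \<le> R * Hsq k n \<psi> t - u2 k n \<psi> t"
  proof (rule DERIV_nonneg_imp_nondecreasing[OF t, where f = "\<lambda>s. R * Hsq k n \<psi> s - u2 k n \<psi> s"])
    fix s assume s: "1 \<le> s" "s \<le> t"
    have "((\<lambda>s. R * Hsq k n \<psi> s - u2 k n \<psi> s) has_real_derivative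
        m12 k \<psi> s * (R * vfun n \<psi> s - x2 n \<psi> s)) (at s)"
      using s by (intro DERIV_cong[OF DERIV_diff[OF DERIV_cmult[OF Hsq_has_real_derivative]
          u2_has_real_derivative]]) (simp_all add: algebra_simps)
    moreover have "0 \<le> m12 k \<psi> s * (R * vfun n \<psi> s - x2 n \<psi> s)"
      using s m12_pos[of s k \<psi>] x2(2)[OF s(1)] by simp
    ultimately show "\<exists>y. ((\<lambda>s. R * Hsq k n \<psi> s - u2 k n \<psi> s) has_real_derivative y) (at s) \<and> y \<ge> 0"
      by blast
  qed
  moreover have "0 \<le> R" using R[of 1] by simp
  then have "0 \<le> R * Hsq k n \<psi> 1" using Hsq_pos[of 1] by simp
  ultimately show "u2 k n \<psi> t \<le> R * Hsq k n \<psi> t" by simp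
qed

context
  assumes \<psi>: "\<psi> > 0"
begin

lemma liouville_le_vfun_sq:
  assumes "t \<ge> 1" "t \<ge> real n / \<psi>^2"
  shows "t * liouville n \<psi> t \<le> vfun n \<psi> t ^ 2"
proof -
  define F where "F = hyp0F1 (real n) (t^2 * \<psi>^2)"
  have "real n \<le> t * \<psi>^2" using assms(2) \<psi> by (simp add: field_simps)
  then have "t \<le> t^2 * \<psi>^2 / real n" using assms(1) n by (simp add: field_simps power2_eq_square)
  also have "\<dots> \<le> F" using hyp0F1_ge_term[of "real n" "t^2 * \<psi>^2" 1] n by (simp add: F_def)
  also have "F \<le> F^2" using hyp0F1_ge_one[of "real n" "t^2 * \<psi>^2"] n by (simp add: F_def power2_eq_square)
  finally have "t \<le> F^2" .
  moreover have "liouville n \<psi> t \<le> exp (- 4 * \<psi> * t)"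
    unfolding liouville_def using assms(1) n by simp
  ultimately have "t * liouville n \<psi> t \<le> F^2 * exp (- 4 * \<psi> * t)"
    using liouville_pos[of n \<psi> t] by (intro mult_mono) auto
  also have "\<dots> = vfun n \<psi> t ^ 2"
    by (simp add: F_def vfun_def power_mult_distrib power2_eq_square mult_exp_exp algebra_simps)
  finally show ?thesis .
qed

lemma rfac_bounded: "\<exists>R. \<forall>t\<ge>1. rfac n \<psi> t \<le> R"
proof -
  define T where "T = max 1 (real n / \<psi>^2)"
  have "1 \<le> T" unfolding T_def by simp
  have "rfac n \<psi> t \<le> rfac n \<psi> T + 1" if t: "t \<ge> 1" for t
  proof (cases "t \<le> T")
    case True
    then show ?thesis using rfac_mono[of t T] t by simp
  next
    case False
    have "rfac n \<psi> t + inverse t \<le> rfac n \<psi> T + inverse T"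
    proof (rule DERIV_nonpos_imp_nonincreasing[where f = "\<lambda>s. rfac n \<psi> s + inverse s"])
      fix s assume "T \<le> s" "s \<le> t"
      then have s: "s \<ge> 1" "s \<ge> real n / \<psi>^2" unfolding T_def by auto
      have "((\<lambda>s. rfac n \<psi> s + inverse s) has_real_derivative
          liouville n \<psi> s / (s * vfun n \<psi> s ^ 2) + - (inverse s ^ 2)) (at s)"
        using s by (intro DERIV_add rfac_has_real_derivative) (auto intro: DERIV_inverse[THEN DERIV_cong] simp: power2_eq_square)
      moreover have "liouville n \<psi> s / (s * vfun n \<psi> s ^ 2) \<le> (vfun n \<psi> s ^ 2 / s) / (s * vfun n \<psi> s ^ 2)"
        using liouville_le_vfun_sq[OF s] s(1) vfun_pos[of s]
        by (intro divide_right_mono) (simp_all add: field_simps)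
      moreover have "(vfun n \<psi> s ^ 2 / s) / (s * vfun n \<psi> s ^ 2) = inverse s ^ 2"
        using s(1) vfun_pos[of s] by (simp add: field_simps power2_eq_square)
      ultimately show "\<exists>y. ((\<lambda>s. rfac n \<psi> s + inverse s) has_real_derivative y) (at s) \<and> y \<le> 0"
        by force
    qed (use False in simp)
    moreover have "0 \<le> inverse t" "inverse T \<le> 1"
      using t \<open>1 \<le> T\<close> by (auto simp: inverse_le_1_iff)
    ultimately show ?thesis by linarith
  qed
  then show ?thesis by blast
qed

lemma liouville_div_vfun_le:
  assumes "t \<ge> 1" "t \<ge> real n / \<psi>^2"
  shows "liouville n \<psi> t / vfun n \<psi> t \<le> vfun n \<psi> t"
proof -
  have "liouville n \<psi> t \<le> t * liouville n \<psi> t" using assms(1) liouville_pos[of n \<psi> t] by simp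
  also have "\<dots> \<le> vfun n \<psi> t ^ 2" using liouville_le_vfun_sq[OF assms] .
  finally show ?thesis using vfun_pos[of t] by (simp add: divide_simps power2_eq_square)
qed

lemma norm_gsol2_le:
  assumes R: "\<And>s. s \<ge> 1 \<Longrightarrow> rfac n \<psi> s \<le> R" and t: "t \<ge> 1" "t \<ge> real n / \<psi>^2"
  shows "norm (gsol2 k n \<psi> t) \<le> (3 * R + 1) * norm (gsol k n \<psi> t)"
proof -
  define N where "N = norm (gsol k n \<psi> t)"
  have "\<bar>gsol k n \<psi> t $ i\<bar> \<le> N" for i by (simp add: N_def component_le_norm_cart)
  from this[of 1] this[of 2] this[of 3]
  have N: "Hsq k n \<psi> t \<le> N" "vfun n \<psi> t \<le> N" "\<bar>vtheta n \<psi> t\<bar> \<le> N"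
    by (simp_all add: gsol_eq)
  have rfac: "0 \<le> rfac n \<psi> t" "rfac n \<psi> t \<le> R" using rfac_nonneg[OF t(1)] R[OF t(1)] by auto
  have "\<bar>u2 k n \<psi> t\<bar> \<le> R * N"
    using u2_bounds[OF R t(1)] N(1) rfac by (auto intro: order.trans mult_left_mono)
  moreover have "\<bar>x2 n \<psi> t\<bar> \<le> R * N"
    using rfac N(2) vfun_pos[of t] by (simp add: x2_def abs_mult mult.commute mult_mono)
  moreover have "\<bar>y2 n \<psi> t\<bar> \<le> R * N + N"
  proof -
    have "rfac n \<psi> t * \<bar>vtheta n \<psi> t\<bar> \<le> R * N"
      using rfac N(3) by (intro mult_mono) auto
    then have "\<bar>vtheta n \<psi> t * rfac n \<psi> t\<bar> \<le> R * N"
      by (simp add: abs_mult abs_of_nonneg[OF rfac(1)] mult.commute)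
    moreover have "\<bar>liouville n \<psi> t / vfun n \<psi> t\<bar> \<le> N"
      using liouville_div_vfun_le[OF t] N(2) liouville_pos[of n \<psi> t] vfun_pos[of t] by simp
    ultimately show ?thesis
      unfolding y2_def by (smt (verit) abs_triangle_ineq)
  qed
  moreover have "norm (gsol2 k n \<psi> t) \<le> \<bar>u2 k n \<psi> t\<bar> + \<bar>x2 n \<psi> t\<bar> + \<bar>y2 n \<psi> t\<bar>"
    using norm_le_l1_cart[of "gsol2 k n \<psi> t"] by (simp add: sum_3 gsol2_def)
  ultimately show ?thesis unfolding N_def by (simp add: algebra_simps)
qed

lemma gsol2_dominated: "\<exists>C>0. \<forall>\<^sub>F t in at_top. norm (gsol2 k n \<psi> t) \<le> C * norm (gsol k n \<psi> t)"
proof -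
  obtain R where R: "\<And>t. t \<ge> 1 \<Longrightarrow> rfac n \<psi> t \<le> R" using rfac_bounded by blast
  have "\<forall>\<^sub>F t in at_top. norm (gsol2 k n \<psi> t) \<le> (3 * R + 1) * norm (gsol k n \<psi> t)"
    using eventually_ge_at_top[of 1] eventually_ge_at_top[of "real n / \<psi>^2"]
    by eventually_elim (rule norm_gsol2_le[OF R])
  moreover have "3 * R + 1 > 0" using R[of 1] by simp
  ultimately show ?thesis by blast
qed

lemma sysM_dominant_basis:
  "\<exists>B. sol_basis (sysM k n \<psi>) 3 B \<and> B 0 = gsol k n \<psi> \<and>
     (\<forall>\<^sub>F t in at_top. \<forall>j<3. norm (B j t) \<le> norm (gsol k n \<psi> t))"
proof -
  obtain C where "C > 0" and gsol2_le: "\<forall>\<^sub>F t in at_top. norm (gsol2 k n \<psi> t) \<le> C * norm (gsol k n \<psi> t)"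
    using gsol2_dominated by blast
  let ?B = "\<lambda>j. [gsol k n \<psi>, \<lambda>t. Hsq k n \<psi> 1 *\<^sub>R vector [1, 0, 0], \<lambda>t. (1 / C) *\<^sub>R gsol2 k n \<psi> t] ! j"
  have "sol_basis (sysM k n \<psi>) 3 ?B"
    using Hsq_pos[of 1] \<open>C > 0\<close> by (intro sol_basis_sysM) auto
  moreover have "\<forall>\<^sub>F t in at_top. \<forall>j<3. norm (?B j t) \<le> norm (gsol k n \<psi> t)"
    using gsol2_le unit_vector_dominated
  proof eventually_elim
    case (elim t)
    have "norm (?B 2 t) \<le> norm (gsol k n \<psi> t)"
      using elim(1) \<open>C > 0\<close> by (simp add: divide_le_eq mult.commute)
    moreover have "norm (?B 1 t) \<le> norm (gsol k n \<psi> t)" using elim(2) by simp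
    moreover have "norm (?B 0 t) \<le> norm (gsol k n \<psi> t)" by simp
    moreover have "(\<forall>j<3. P j) \<longleftrightarrow> P 0 \<and> P 1 \<and> P 2" for P :: "nat \<Rightarrow> bool"
      by (auto simp: eval_nat_numeral less_Suc_eq)
    ultimately show ?case by presburger
  qed
  ultimately show ?thesis by auto
qed

end

end

theorem theorem5:
  fixes k n :: nat and \<psi> :: real
  assumes "n \<ge> 1" and "\<psi> > 0"
  shows "stabile (sysM k n \<psi>) (gsol k n \<psi>)"
proof -
  obtain B where "sol_basis (sysM k n \<psi>) 3 B" "B 0 = gsol k n \<psi>"
    and "\<forall>\<^sub>F t in at_top. \<forall>j<3. norm (B j t) \<le> norm (gsol k n \<psi> t)"
    using sysM_dominant_basis[OF assms] by blast
  then show ?thesis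
    using gsol_nonzero[OF assms(1)] by (intro stabileI[where i = 0]) auto
qed

end
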